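(* Let $A=(S^c)_{sa}$ and let $L(\phi)=\max_{i=1,2,3}\|\delta_i(\phi)\|_{\infty,\infty,1}$. Then for all states $\omega_1,\omega_2\in S(A)$, $$\rho_L(\omega_1,\omega_2)=\sup\{|\omega_1(a)-\omega_2(a)|:\ a\in A,\ L(a)\le1\}\le 6.$$
   Context: Let $\mathbb T=\mathbb R/\mathbb Z$ and $e(t)=e^{2\pi it}$. Fix a positive integer $c$ and real numbers $\hbar,\mu,\nu$ with $\mu^2+\nu^2\ne0$. $S^c$ is the space of $C^\infty$ functions $\Phi:\mathbb R\times\mathbb T\times\mathbb Z\to\mathbb C$ satisfying two conditions: (a) $\Phi(x+k,y,p)=e(ckpy)\Phi(x,y,p)$ for all $k\in\mathbb Z$; (b) for every polynomial $P$ on $\mathbb Z$, every $m,n\ge0$ and every compact $K\subset\mathbb R\times\mathbb T$, the function $P(p)\,\partial_x^m\partial_y^n\Phi$ is bounded on $K\times\mathbb Z$. Product and involution on $S^c$: $$(\Phi\star\Psi)(x,y,p)=\sum_{q}\Phi(x-\hbar(q-p)\mu,\,y-\hbar(q-p)\nu,\,q)\,\Psi(x-\hbar q\mu,\,y-\hbar q\nu,\,p-q),$$ $$\Phi^*(x,y,p)=\overline{\Phi(x,y,-p)}.$$ These act faithfully on $L^2(\mathbb R\times\mathbb T\times\mathbb Z)$ via $$(\pi(\Phi)\xi)(x,y,p)=\sum_q\Phi(x-\hbar(q-2p)\mu,\,y-\hbar(q-2p)\nu,\,q)\,\xi(x,y,p-q).$$ The C*-norm on $S^c$ is the operator norm of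 $\pi(\cdot)$. The identity $I$ is $(x,y,p)\mapsto\delta_{p0}$. $A=(S^c)_{sa}$ is the self-adjoint part, an order unit space with order unit $I$, order inherited from the C*-algebra, and the C*-norm. A state of $A$ is a bounded linear functional $\omega$ with $\omega(I)=1=\|\omega\|$; $S(A)$ is the set of states. The norm $\|\cdot\|_{\infty,\infty,1}$ is defined by $\|\phi\|_{\infty,\infty,1}=\sum_{p\in\mathbb Z}\sup_{x\in\mathbb R,y\in\mathbb T}|\phi(x,y,p)|$. The derivations are: $$\delta_1(\phi)=-\partial_x\phi,$$ $$\delta_2(\phi)(x,y,p)=2\pi icpx\,\phi(x,y,p)-\partial_y\phi(x,y,p),$$ $$\delta_3(\phi)(x,y,p)=2\pi ip\,\phi(x,y,p).$$ *)

theory Defs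
  imports "HOL-Analysis.Analysis" "HOL-Computational_Algebra.Polynomial"
begin

text \<open>Functions on R x T x Z are represented as functions real => real => int => complex
  that are 1-periodic in the second (torus) variable.\<close>

type_synonym fn3 = "real \<Rightarrow> real \<Rightarrow> int \<Rightarrow> complex"

definition e :: "real \<Rightarrow> complex" where
  "e t = cis (2 * pi * t)"

definition dx2 :: "(real \<Rightarrow> real \<Rightarrow> complex) \<Rightarrow> real \<Rightarrow> real \<Rightarrow> complex" where
  "dx2 f x y = vector_derivative (\<lambda>t. f t y) (at x)"

definition dy2 :: "(real \<Rightarrow> real \<Rightarrow> complex) \<Rightarrow> real \<Rightarrow> real \<Rightarrow> complex" where
  "dy2 f x y = vector_derivative (\<lambda>t. f x t) (at y)"

text \<open>Iterated partial derivative along a word (True = d/dx, False = d/dy).\<close>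
fun dword :: "bool list \<Rightarrow> (real \<Rightarrow> real \<Rightarrow> complex) \<Rightarrow> real \<Rightarrow> real \<Rightarrow> complex" where
  "dword [] f = f"
| "dword (b # bs) f = (if b then dx2 else dy2) (dword bs f)"

definition smooth2 :: "(real \<Rightarrow> real \<Rightarrow> complex) \<Rightarrow> bool" where
  "smooth2 f \<longleftrightarrow> (\<forall>ws. continuous_on UNIV (\<lambda>z. dword ws f (fst z) (snd z))
      \<and> (\<forall>x y. (\<lambda>t. dword ws f t y) differentiable (at x)
              \<and> (\<lambda>t. dword ws f x t) differentiable (at y)))"

definition pdx :: "fn3 \<Rightarrow> fn3" where
  "pdx \<Phi> x y p = dx2 (\<lambda>a b. \<Phi> a b p) x y"

definition pdy :: "fn3 \<Rightarrow> fn3" where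
  "pdy \<Phi> x y p = dy2 (\<lambda>a b. \<Phi> a b p) x y"

definition Sc :: "int \<Rightarrow> fn3 set" where
  "Sc c = {\<Phi>.
     (\<forall>p. smooth2 (\<lambda>x y. \<Phi> x y p)) \<and>
     (\<forall>x y p. \<Phi> x (y + 1) p = \<Phi> x y p) \<and>
     (\<forall>x y p (k::int). \<Phi> (x + of_int k) y p = e (of_int c * of_int k * of_int p * y) * \<Phi> x y p) \<and>
     (\<forall>(P::real poly) m n (K::(real \<times> real) set). compact K \<longrightarrow>
        (\<exists>B. \<forall>z\<in>K. \<forall>p. norm (of_real (poly P (of_int p)) * (pdx ^^ m) ((pdy ^^ n) \<Phi>) (fst z) (snd z) p) \<le> B))}"

definition invol :: "fn3 \<Rightarrow> fn3" where
  "invol \<Phi> x y p = cnj (\<Phi> x y (- p))"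

definition unitI :: fn3 where
  "unitI x y p = (if p = 0 then 1 else 0)"

text \<open>L^2(R x T x Z): squared norm, with T = [0,1).\<close>
definition l2sq :: "fn3 \<Rightarrow> ennreal" where
  "l2sq \<xi> = (\<integral>\<^sup>+ p. (\<integral>\<^sup>+ z. ennreal ((norm (\<xi> (fst z) (snd z) p))\<^sup>2)
        * indicator (UNIV \<times> {0..<1}) z \<partial>lborel) \<partial>count_space UNIV)"

definition L2unit :: "fn3 set" where
  "L2unit = {\<xi>. (\<forall>p. (\<lambda>z. \<xi> (fst z) (snd z) p) \<in> borel_measurable borel) \<and> l2sq \<xi> \<le> 1}"

definition repr :: "real \<Rightarrow> real \<Rightarrow> real \<Rightarrow> fn3 \<Rightarrow> fn3 \<Rightarrow> fn3" where
  "repr h \<mu> \<nu> \<Phi> \<xi> x y p =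
     (\<Sum>\<^sub>\<infinity>q. \<Phi> (x - h * of_int (q - 2 * p) * \<mu>) (y - h * of_int (q - 2 * p) * \<nu>) q * \<xi> x y (p - q))"

definition cnorm :: "real \<Rightarrow> real \<Rightarrow> real \<Rightarrow> fn3 \<Rightarrow> real" where
  "cnorm h \<mu> \<nu> \<Phi> = sqrt (enn2real (SUP \<xi>\<in>L2unit. l2sq (repr h \<mu> \<nu> \<Phi> \<xi>)))"

definition Asa :: "int \<Rightarrow> fn3 set" where
  "Asa c = {\<Phi> \<in> Sc c. invol \<Phi> = \<Phi>}"

definition states :: "int \<Rightarrow> real \<Rightarrow> real \<Rightarrow> real \<Rightarrow> (fn3 \<Rightarrow> real) set" where
  "states c h \<mu> \<nu> = {\<omega>.
     (\<forall>a\<in>Asa c. \<forall>b\<in>Asa c. \<omega> (\<lambda>x y p. a x y p + b x y p) = \<omega> a + \<omega> b) \<and>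
     (\<forall>a\<in>Asa c. \<forall>r::real. \<omega> (\<lambda>x y p. of_real r * a x y p) = r * \<omega> a) \<and>
     (\<exists>K. \<forall>a\<in>Asa c. \<bar>\<omega> a\<bar> \<le> K * cnorm h \<mu> \<nu> a) \<and>
     \<omega> unitI = 1 \<and>
     (SUP a\<in>{a\<in>Asa c. cnorm h \<mu> \<nu> a \<le> 1}. \<bar>\<omega> a\<bar>) = 1}"

definition norm_ii1 :: "fn3 \<Rightarrow> ennreal" where
  "norm_ii1 \<phi> = (\<integral>\<^sup>+ p. (SUP z\<in>(UNIV::(real\<times>real) set). ennreal (norm (\<phi> (fst z) (snd z) p))) \<partial>count_space UNIV)"

definition delta1 :: "fn3 \<Rightarrow> fn3" where
  "delta1 \<phi> x y p = - pdx \<phi> x y p"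

definition delta2 :: "int \<Rightarrow> fn3 \<Rightarrow> fn3" where
  "delta2 c \<phi> x y p = 2 * pi * \<i> * of_int c * of_int p * of_real x * \<phi> x y p - pdy \<phi> x y p"

definition delta3 :: "fn3 \<Rightarrow> fn3" where
  "delta3 \<phi> x y p = 2 * pi * \<i> * of_int p * \<phi> x y p"

definition Lnorm :: "int \<Rightarrow> fn3 \<Rightarrow> ennreal" where
  "Lnorm c \<phi> = max (norm_ii1 (delta1 \<phi>)) (max (norm_ii1 (delta2 c \<phi>)) (norm_ii1 (delta3 \<phi>)))"

definition rhoL :: "int \<Rightarrow> (fn3 \<Rightarrow> real) \<Rightarrow> (fn3 \<Rightarrow> real) \<Rightarrow> ereal" where
  "rhoL c \<omega>1 \<omega>2 = (SUP a\<in>{a\<in>Asa c. Lnorm c a \<le> 1}. ereal \<bar>\<omega>1 a - \<omega>2 a\<bar>)"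

end

theory Submission
  imports Defs "HOL-Library.Periodic_Fun"
begin

(*
  Let a be self-adjoint with L(a) <= 1 and put t = a(0,0,0), a real number because a* = a.
  Since every state maps I to 1, omega1(a) - omega2(a) = omega1(b) - omega2(b) for b = a - t I.
  On the mode p = 0 the twist e(ckpy) is trivial, so b(.,.,0) is 1-periodic in x and in y and
  vanishes at the origin; as delta1 and delta2 reduce to -d/dx and -d/dy there, the mean value
  theorem gives |b(x,y,0)| <= 2.  For p <> 0 we have |b| <= |delta3 b| because 2 pi |p| >= 1.
  Hence ||b||_{inf,inf,1} <= 2 + 1 = 3.  The operator pi(b) is a twisted convolution, and
  Cauchy-Schwarz together with Tonelli bound its C*-norm by ||b||_{inf,inf,1}.  States have
  norm 1, so |omega_i(b)| <= 3 and the difference is at most 6.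
*)

lemma dword_append: "dword (xs @ ys) f = dword xs (dword ys f)"
  by (induction xs) auto

lemma pdx_funpow_eq_dword:
  "(\<lambda>x y. (pdx ^^ n) \<Phi> x y p) = dword (replicate n True) (\<lambda>x y. \<Phi> x y p)"
  by (induction n) (simp_all add: pdx_def[abs_def])

lemma pdy_funpow_eq_dword:
  "(\<lambda>x y. (pdy ^^ n) \<Phi> x y p) = dword (replicate n False) (\<lambda>x y. \<Phi> x y p)"
  by (induction n) (simp_all add: pdy_def[abs_def])

lemma pdx_pdy_funpow_eq_dword:
  "(pdx ^^ m) ((pdy ^^ n) \<Phi>) x y p
     = dword (replicate m True @ replicate n False) (\<lambda>x y. \<Phi> x y p) x y"
  by (simp add: dword_append flip: pdx_funpow_eq_dword pdy_funpow_eq_dword)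

lemma smooth2_has_dx2:
  assumes "smooth2 f"
  shows "((\<lambda>t. dword ws f t y) has_vector_derivative dx2 (dword ws f) x y) (at x)"
  using assms unfolding smooth2_def dx2_def by (simp add: vector_derivative_works)

lemma smooth2_has_dy2:
  assumes "smooth2 f"
  shows "((\<lambda>t. dword ws f x t) has_vector_derivative dy2 (dword ws f) x y) (at y)"
  using assms unfolding smooth2_def dy2_def by (simp add: vector_derivative_works)

lemma dword_linear:
  assumes f: "smooth2 f" and g: "smooth2 g"
  shows "dword ws (\<lambda>x y. \<alpha> * f x y + \<beta> * g x y)
           = (\<lambda>x y. \<alpha> * dword ws f x y + \<beta> * dword ws g x y)"
proof (induction ws)
  case (Cons b bs)
  have "((\<lambda>t. \<alpha> * dword bs f t y + \<beta> * dword bs g t y) has_vector_derivative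
          \<alpha> * dx2 (dword bs f) x y + \<beta> * dx2 (dword bs g) x y) (at x)"
    and "((\<lambda>t. \<alpha> * dword bs f x t + \<beta> * dword bs g x t) has_vector_derivative
          \<alpha> * dy2 (dword bs f) x y + \<beta> * dy2 (dword bs g) x y) (at y)" for x y
    by (intro derivative_intros smooth2_has_dx2 smooth2_has_dy2 f g)+
  then show ?case
    using Cons by (intro ext) (simp add: dx2_def dy2_def vector_derivative_at)
qed simp

lemma smooth2_linear:
  assumes f: "smooth2 f" and g: "smooth2 g"
  shows "smooth2 (\<lambda>x y. \<alpha> * f x y + \<beta> * g x y)"
  using assms unfolding smooth2_def dword_linear[OF f g]
  by (simp add: continuous_on_add continuous_on_mult_left)

lemma dword_const: "dword ws (\<lambda>x y. k) = (\<lambda>x y. if ws = [] then k else 0)"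
  by (induction ws) (auto simp: dx2_def dy2_def)

lemma smooth2_const: "smooth2 (\<lambda>x y. k)"
  unfolding smooth2_def dword_const by auto

lemma Sc_smooth2: "\<Phi> \<in> Sc c \<Longrightarrow> smooth2 (\<lambda>x y. \<Phi> x y p)"
  by (simp add: Sc_def)

lemma Sc_periodic: "\<Phi> \<in> Sc c \<Longrightarrow> \<Phi> x (y + 1) p = \<Phi> x y p"
  by (simp add: Sc_def)

lemma Sc_quasi_periodic:
  "\<Phi> \<in> Sc c \<Longrightarrow> \<Phi> (x + of_int k) y p = e (of_int c * of_int k * of_int p * y) * \<Phi> x y p"
  by (simp add: Sc_def)

lemma Sc_rapid_decay:
  assumes "\<Phi> \<in> Sc c" and "compact K"
  obtains B where "\<And>z p. z \<in> K \<Longrightarrow>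
    norm (of_real (poly P (of_int p)) * (pdx ^^ m) ((pdy ^^ n) \<Phi>) (fst z) (snd z) p) \<le> B"
  using assms(1)[unfolded Sc_def, THEN CollectD, THEN conjunct2, THEN conjunct2, THEN conjunct2,
      rule_format, OF assms(2)] that
  by blast

lemma pdx_pdy_funpow_linear:
  assumes \<Phi>: "\<Phi> \<in> Sc c" and \<Psi>: "\<Psi> \<in> Sc c"
  shows "(pdx ^^ m) ((pdy ^^ n) (\<lambda>x y p. \<alpha> * \<Phi> x y p + \<beta> * \<Psi> x y p)) x y p
           = \<alpha> * (pdx ^^ m) ((pdy ^^ n) \<Phi>) x y p + \<beta> * (pdx ^^ m) ((pdy ^^ n) \<Psi>) x y p"
  unfolding pdx_pdy_funpow_eq_dword using dword_linear[OF Sc_smooth2[OF \<Phi>] Sc_smooth2[OF \<Psi>]]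
  by simp

lemma Sc_linear:
  assumes \<Phi>: "\<Phi> \<in> Sc c" and \<Psi>: "\<Psi> \<in> Sc c"
  shows "(\<lambda>x y p. \<alpha> * \<Phi> x y p + \<beta> * \<Psi> x y p) \<in> Sc c"
proof -
  have decay: "\<exists>B. \<forall>z\<in>K. \<forall>p. norm (of_real (poly P (of_int p)) *
      (pdx ^^ m) ((pdy ^^ n) (\<lambda>x y p. \<alpha> * \<Phi> x y p + \<beta> * \<Psi> x y p)) (fst z) (snd z) p) \<le> B"
    if K: "compact K" for P m n and K :: "(real \<times> real) set"
  proof -
    obtain B1 where B1: "\<And>z p. z \<in> K \<Longrightarrow>
        norm (of_real (poly P (of_int p)) * (pdx ^^ m) ((pdy ^^ n) \<Phi>) (fst z) (snd z) p) \<le> B1"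
      using Sc_rapid_decay[OF \<Phi> K] by blast
    obtain B2 where B2: "\<And>z p. z \<in> K \<Longrightarrow>
        norm (of_real (poly P (of_int p)) * (pdx ^^ m) ((pdy ^^ n) \<Psi>) (fst z) (snd z) p) \<le> B2"
      using Sc_rapid_decay[OF \<Psi> K] by blast
    have "norm (of_real (poly P (of_int p)) * (pdx ^^ m) ((pdy ^^ n)
             (\<lambda>x y p. \<alpha> * \<Phi> x y p + \<beta> * \<Psi> x y p)) (fst z) (snd z) p)
          \<le> norm \<alpha> * B1 + norm \<beta> * B2" if "z \<in> K" for z p
    proof -
      let ?P = "of_real (poly P (of_int p)) :: complex"
      let ?a = "(pdx ^^ m) ((pdy ^^ n) \<Phi>) (fst z) (snd z) p"
      let ?b = "(pdx ^^ m) ((pdy ^^ n) \<Psi>) (fst z) (snd z) p"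
      have "norm (?P * (\<alpha> * ?a + \<beta> * ?b)) = norm (\<alpha> * (?P * ?a) + \<beta> * (?P * ?b))"
        by (simp add: algebra_simps)
      also have "\<dots> \<le> norm \<alpha> * norm (?P * ?a) + norm \<beta> * norm (?P * ?b)"
        by (rule order_trans[OF norm_triangle_ineq]) (simp add: norm_mult)
      also have "\<dots> \<le> norm \<alpha> * B1 + norm \<beta> * B2"
        using B1 B2 \<open>z \<in> K\<close> by (intro add_mono mult_left_mono) auto
      finally show ?thesis by (simp add: pdx_pdy_funpow_linear[OF \<Phi> \<Psi>])
    qed
    then show ?thesis by blast
  qed
  show ?thesis
    unfolding Sc_def mem_Collect_eq
  proof (intro conjI allI impI decay)
    show "smooth2 (\<lambda>x y. \<alpha> * \<Phi> x y p + \<beta> * \<Psi> x y p)" for p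
      using Sc_smooth2[OF \<Phi>] Sc_smooth2[OF \<Psi>] by (rule smooth2_linear)
    show "\<alpha> * \<Phi> x (y + 1) p + \<beta> * \<Psi> x (y + 1) p = \<alpha> * \<Phi> x y p + \<beta> * \<Psi> x y p" for x y p
      by (simp add: Sc_periodic[OF \<Phi>] Sc_periodic[OF \<Psi>])
    show "\<alpha> * \<Phi> (x + of_int k) y p + \<beta> * \<Psi> (x + of_int k) y p
        = e (of_int c * of_int k * of_int p * y) * (\<alpha> * \<Phi> x y p + \<beta> * \<Psi> x y p)" for x y p k
      by (simp add: Sc_quasi_periodic[OF \<Phi>] Sc_quasi_periodic[OF \<Psi>] distrib_left mult.left_commute)
  qed
qed

lemma invol_linear:
  "invol (\<lambda>x y p. of_real r * \<Phi> x y p + of_real s * \<Psi> x y p)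
     = (\<lambda>x y p. of_real r * invol \<Phi> x y p + of_real s * invol \<Psi> x y p)"
  by (simp add: invol_def fun_eq_iff)

lemma Asa_linear:
  assumes "\<Phi> \<in> Asa c" and "\<Psi> \<in> Asa c"
  shows "(\<lambda>x y p. of_real r * \<Phi> x y p + of_real s * \<Psi> x y p) \<in> Asa c"
  using assms Sc_linear by (simp add: Asa_def invol_linear)

lemma Asa_scale:
  assumes "\<Phi> \<in> Asa c"
  shows "(\<lambda>x y p. of_real r * \<Phi> x y p) \<in> Asa c"
  using Asa_linear[OF assms assms, of r 0] by simp

lemma unitI_in_Sc: "unitI \<in> Sc c"
proof -
  have derivs: "(pdx ^^ m) ((pdy ^^ n) unitI) x y p = (if m = 0 \<and> n = 0 then unitI x y p else 0)"
    for m n x y p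
    by (simp add: pdx_pdy_funpow_eq_dword unitI_def dword_const)
  have decay: "\<exists>B. \<forall>z\<in>K. \<forall>p. norm (of_real (poly P (of_int p)) *
      (pdx ^^ m) ((pdy ^^ n) unitI) (fst z) (snd z) p) \<le> B" for P m n and K :: "(real \<times> real) set"
    by (intro exI[of _ "norm (poly P 0)"]) (auto simp: derivs unitI_def norm_mult)
  show ?thesis
    unfolding Sc_def mem_Collect_eq
    by (intro conjI allI impI decay) (simp_all add: unitI_def e_def smooth2_const)
qed

lemma unitI_in_Asa: "unitI \<in> Asa c"
  using unitI_in_Sc by (simp add: Asa_def invol_def unitI_def fun_eq_iff)

lemma norm_diff_le_of_vector_derivative_bound:
  fixes f :: "real \<Rightarrow> 'a::real_normed_vector"
  assumes "\<And>t. (f has_vector_derivative f' t) (at t)" and "\<And>t. norm (f' t) \<le> B"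
  shows "norm (f b - f a) \<le> B * \<bar>b - a\<bar>"
proof -
  have "norm (f b - f a) \<le> B * norm (b - a)"
  proof (rule differentiable_bound[where S=UNIV and f'="\<lambda>t h. h *\<^sub>R f' t"])
    show "(f has_derivative (\<lambda>h. h *\<^sub>R f' t)) (at t within UNIV)" for t
      using assms(1) by (simp add: has_vector_derivative_def)
    show "onorm (\<lambda>h. h *\<^sub>R f' t) \<le> B" for t
      using assms(2) by (simp add: onorm_scaleR_left bounded_linear_ident onorm_id)
  qed auto
  then show ?thesis by simp
qed

lemma nn_integral_count_space_ge_point:
  fixes f :: "'a \<Rightarrow> ennreal"
  shows "f a \<le> (\<integral>\<^sup>+ x. f x \<partial>count_space UNIV)"
proof -
  have "f a = (\<integral>\<^sup>+ x. f a * indicator {a} x \<partial>count_space UNIV)"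
    by (simp add: nn_integral_cmult_indicator)
  also have "\<dots> \<le> (\<integral>\<^sup>+ x. f x \<partial>count_space UNIV)"
    by (intro nn_integral_mono) (auto split: split_indicator)
  finally show ?thesis .
qed

definition mode_sup :: "fn3 \<Rightarrow> int \<Rightarrow> ennreal" where
  "mode_sup \<phi> p = (SUP z. ennreal (norm (\<phi> (fst z) (snd z) p)))"

lemma norm_ii1_eq_mode_sup: "norm_ii1 \<phi> = (\<integral>\<^sup>+ p. mode_sup \<phi> p \<partial>count_space UNIV)"
  by (simp add: norm_ii1_def mode_sup_def)

lemma norm_le_mode_sup: "ennreal (norm (\<phi> x y p)) \<le> mode_sup \<phi> p"
  unfolding mode_sup_def by (rule SUP_upper2[of "(x, y)"]) auto

lemma norm_le_norm_ii1: "ennreal (norm (\<phi> x y p)) \<le> norm_ii1 \<phi>"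
  unfolding norm_ii1_eq_mode_sup
  using norm_le_mode_sup nn_integral_count_space_ge_point by (rule order_trans)

lemma norm_le_1_if_norm_ii1_le_1: "norm_ii1 \<phi> \<le> 1 \<Longrightarrow> norm (\<phi> x y p) \<le> 1"
  using norm_le_norm_ii1[of \<phi> x y p] by (metis ennreal_le_1 order_trans)

lemma norm_ii1_le:
  assumes "\<And>x y p. ennreal (norm (\<phi> x y p)) \<le> g p"
  shows "norm_ii1 \<phi> \<le> (\<integral>\<^sup>+ p. g p \<partial>count_space UNIV)"
  unfolding norm_ii1_def using assms by (intro nn_integral_mono SUP_least) auto

lemma norm_ii1_scale:
  "norm_ii1 (\<lambda>x y p. of_real r * \<phi> x y p) = ennreal \<bar>r\<bar> * norm_ii1 \<phi>"
proof -
  have "mode_sup (\<lambda>x y p. of_real r * \<phi> x y p) p = ennreal \<bar>r\<bar> * mode_sup \<phi> p" for p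
    by (simp add: mode_sup_def norm_mult ennreal_mult SUP_mult_left_ennreal)
  then show ?thesis
    by (simp add: norm_ii1_eq_mode_sup nn_integral_cmult)
qed

lemma Sc_zero_mode_frac:
  assumes "\<Phi> \<in> Sc c"
  shows "\<Phi> x y 0 = \<Phi> (frac x) (frac y) 0"
proof -
  interpret periodic_fun_simple' "\<lambda>t. \<Phi> (frac x) t 0"
    by standard (rule Sc_periodic[OF assms])
  have "\<Phi> x y 0 = \<Phi> (frac x + of_int \<lfloor>x\<rfloor>) y 0"
    by (simp add: frac_def)
  also have "\<dots> = \<Phi> (frac x) y 0"
    by (simp add: Sc_quasi_periodic[OF assms] e_def)
  also have "\<dots> = \<Phi> (frac x) (frac y + of_int \<lfloor>y\<rfloor>) 0"
    by (simp add: frac_def)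
  also have "\<dots> = \<Phi> (frac x) (frac y) 0"
    by (rule plus_of_int)
  finally show ?thesis .
qed

lemma zero_mode_oscillation_le_2:
  assumes a: "a \<in> Sc c"
    and \<delta>1: "norm_ii1 (delta1 a) \<le> 1" and \<delta>2: "norm_ii1 (delta2 c a) \<le> 1"
  shows "norm (a x y 0 - a 0 0 0) \<le> 2"
proof -
  have smooth: "smooth2 (\<lambda>x y. a x y 0)"
    by (rule Sc_smooth2[OF a])
  have dx: "((\<lambda>t. a t y 0) has_vector_derivative pdx a t y 0) (at t)" for t y
    using smooth2_has_dx2[OF smooth, of "[]"] by (simp add: pdx_def)
  have dy: "((\<lambda>t. a x t 0) has_vector_derivative pdy a x t 0) (at t)" for x t
    using smooth2_has_dy2[OF smooth, of "[]"] by (simp add: pdy_def)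
  have "norm (delta1 a x y 0) \<le> 1" and "norm (delta2 c a x y 0) \<le> 1" for x y
    using \<delta>1 \<delta>2 by (simp_all add: norm_le_1_if_norm_ii1_le_1)
  then have pdx_le: "norm (pdx a x y 0) \<le> 1" and pdy_le: "norm (pdy a x y 0) \<le> 1" for x y
    by (simp_all add: delta1_def delta2_def)
  have "norm (a (frac x) (frac y) 0 - a 0 (frac y) 0) \<le> 1"
    using norm_diff_le_of_vector_derivative_bound[OF dx[of "frac y"] pdx_le[of _ "frac y"], of "frac x" 0] frac_lt_1[of x]
    by simp
  moreover have "norm (a 0 (frac y) 0 - a 0 0 0) \<le> 1"
    using norm_diff_le_of_vector_derivative_bound[OF dy[of 0] pdy_le[of 0], of "frac y" 0] frac_lt_1[of y]
    by simp
  ultimately have "norm (a (frac x) (frac y) 0 - a 0 0 0) \<le> 1 + 1"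
    by (rule norm_diff_triangle_le)
  then show ?thesis
    by (simp flip: Sc_zero_mode_frac[OF a])
qed

lemma norm_le_norm_delta3:
  assumes "p \<noteq> 0"
  shows "norm (\<phi> x y p) \<le> norm (delta3 \<phi> x y p)"
proof -
  have "1 \<le> 2 * pi * \<bar>real_of_int p\<bar>"
    using assms pi_gt3 by (simp add: mult_ge1_I del: of_int_abs)
  then have "norm (\<phi> x y p) \<le> 2 * pi * \<bar>real_of_int p\<bar> * norm (\<phi> x y p)"
    by (simp add: mult_le_cancel_right1)
  also have "\<dots> = norm (delta3 \<phi> x y p)"
    by (simp add: delta3_def norm_mult)
  finally show ?thesis .
qed

lemma zero_mode_real_if_invol_fixed:
  assumes "invol \<phi> = \<phi>"
  shows "of_real (Re (\<phi> x y 0)) = \<phi> x y 0"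
proof -
  have "cnj (\<phi> x y 0) = \<phi> x y 0"
    using assms unfolding invol_def fun_eq_iff by (metis minus_zero)
  then show ?thesis
    by (simp add: Reals_cnj_iff[symmetric])
qed

lemma norm_ii1_sub_zero_mode_le_3:
  assumes a: "a \<in> Sc c" and L: "Lnorm c a \<le> 1"
  shows "norm_ii1 (\<lambda>x y p. a x y p - a 0 0 0 * unitI x y p) \<le> 3"
proof -
  have \<delta>1: "norm_ii1 (delta1 a) \<le> 1" and \<delta>2: "norm_ii1 (delta2 c a) \<le> 1"
    and \<delta>3: "norm_ii1 (delta3 a) \<le> 1"
    using L by (simp_all add: Lnorm_def)
  define g where "g p = 2 * indicator {0} p + mode_sup (delta3 a) p" for p :: int
  have "ennreal (norm (a x y p - a 0 0 0 * unitI x y p)) \<le> g p" for x y p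
  proof (cases "p = 0")
    case True
    then have "norm (a x y p - a 0 0 0 * unitI x y p) \<le> 2"
      using zero_mode_oscillation_le_2[OF a \<delta>1 \<delta>2] by (simp add: unitI_def)
    then have "ennreal (norm (a x y p - a 0 0 0 * unitI x y p)) \<le> ennreal 2"
      by (rule ennreal_leI)
    then show ?thesis
      using True by (simp add: g_def add_increasing2)
  next
    case False
    then have "ennreal (norm (a x y p - a 0 0 0 * unitI x y p)) \<le> ennreal (norm (delta3 a x y p))"
      by (simp add: unitI_def ennreal_leI norm_le_norm_delta3)
    also have "\<dots> \<le> g p"
      by (simp add: g_def norm_le_mode_sup add_increasing)
    finally show ?thesis .
  qed
  then have "norm_ii1 (\<lambda>x y p. a x y p - a 0 0 0 * unitI x y p) \<le> (\<integral>\<^sup>+ p. g p \<partial>count_space UNIV)"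
    by (rule norm_ii1_le)
  also have "\<dots> = 2 + norm_ii1 (delta3 a)"
    by (simp add: g_def nn_integral_add nn_integral_cmult_indicator norm_ii1_eq_mode_sup)
  also have "\<dots> \<le> 3"
    using \<delta>3 add_left_mono[OF \<delta>3, of 2] by simp
  finally show ?thesis .
qed

lemma weighted_Cauchy_Schwarz_nn_integral:
  assumes [measurable]: "s \<in> borel_measurable M" "v \<in> borel_measurable M"
  shows "(\<integral>\<^sup>+x. s x * v x \<partial>M) ^ 2 \<le> (\<integral>\<^sup>+x. s x \<partial>M) * (\<integral>\<^sup>+x. s x * v x ^ 2 \<partial>M)"
  using Cauchy_Schwarz_nn_integral[of "\<lambda>_. 1" "density M s" v]
  by (simp add: nn_integral_density emeasure_density)

lemma norm_repr_le_convolution: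
  "ennreal (norm (repr h \<mu> \<nu> \<phi> \<xi> x y p))
     \<le> (\<integral>\<^sup>+q. mode_sup \<phi> q * ennreal (norm (\<xi> x y (p - q))) \<partial>count_space UNIV)"
  (is "_ \<le> ?T")
proof (cases "?T = \<infinity>")
  case False
  define w where "w q = \<phi> (x - h * of_int (q - 2 * p) * \<mu>) (y - h * of_int (q - 2 * p) * \<nu>) q
    * \<xi> x y (p - q)" for q
  have w_le: "(\<integral>\<^sup>+q. ennreal (norm (w q)) \<partial>count_space UNIV) \<le> ?T"
    unfolding w_def norm_mult ennreal_mult'[OF norm_ge_zero]
    by (intro nn_integral_mono mult_right_mono norm_le_mode_sup) simp
  with False have "integrable (count_space UNIV) w"
    by (intro integrableI_bounded) (simp_all add: top.not_eq_extremum le_less_trans)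
  then have summable: "Infinite_Set_Sum.abs_summable_on w UNIV"
    by (simp add: abs_summable_on_def)
  have "norm (infsum w UNIV) \<le> infsum (\<lambda>q. norm (w q)) UNIV"
    using summable abs_summable_equivalent by (blast intro: norm_infsum_bound)
  also have "\<dots> = infsetsum (\<lambda>q. norm (w q)) UNIV"
    using summable by (simp add: abs_summable_on_normI infsetsum_infsum)
  finally have "ennreal (norm (infsum w UNIV)) \<le> ennreal (infsetsum (\<lambda>q. norm (w q)) UNIV)"
    by (rule ennreal_leI)
  also have "\<dots> = (\<integral>\<^sup>+q. ennreal (norm (w q)) \<partial>count_space UNIV)"
    using summable by (simp add: abs_summable_on_normI nn_integral_conv_infsetsum)
  also note w_le
  finally show ?thesis
    by (simp add: repr_def w_def[abs_def])
qed simp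

lemma norm_repr_sq_le:
  "ennreal (norm (repr h \<mu> \<nu> \<phi> \<xi> x y p)) ^ 2
     \<le> norm_ii1 \<phi> * (\<integral>\<^sup>+q. mode_sup \<phi> q * ennreal (norm (\<xi> x y (p - q))) ^ 2 \<partial>count_space UNIV)"
proof -
  have "ennreal (norm (repr h \<mu> \<nu> \<phi> \<xi> x y p)) ^ 2
      \<le> (\<integral>\<^sup>+q. mode_sup \<phi> q * ennreal (norm (\<xi> x y (p - q))) \<partial>count_space UNIV) ^ 2"
    by (intro power_mono norm_repr_le_convolution) simp
  also have "\<dots> \<le> norm_ii1 \<phi> * (\<integral>\<^sup>+q. mode_sup \<phi> q * ennreal (norm (\<xi> x y (p - q))) ^ 2 \<partial>count_space UNIV)"
    unfolding norm_ii1_eq_mode_sup by (rule weighted_Cauchy_Schwarz_nn_integral) simp_all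
  finally show ?thesis .
qed

lemma nn_integral_count_space_shift:
  fixes f :: "'a::group_add \<Rightarrow> ennreal"
  shows "(\<integral>\<^sup>+x. f (x - a) \<partial>count_space UNIV) = (\<integral>\<^sup>+x. f x \<partial>count_space UNIV)"
  by (rule nn_integral_bij_count_space) (rule bij_betwI[where g="\<lambda>x. x + a"], auto)

lemma l2sq_repr_le:
  assumes meas: "\<And>p. (\<lambda>z. \<xi> (fst z) (snd z) p) \<in> borel_measurable borel"
  shows "l2sq (repr h \<mu> \<nu> \<phi> \<xi>) \<le> norm_ii1 \<phi> ^ 2 * l2sq \<xi>"
proof -
  let ?C = "count_space (UNIV :: int set)"
  define S where "S = norm_ii1 \<phi>"
  define u where "u p z = ennreal (norm (\<xi> (fst z) (snd z) p)) ^ 2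
    * indicator (UNIV \<times> {0..<1::real}) z" for p z
  have [measurable]: "u p \<in> borel_measurable borel" for p
  proof -
    have "UNIV \<times> {0..<1::real} \<in> sets (borel :: (real \<times> real) measure)"
      by (simp add: borel_prod[symmetric])
    with meas[of p] show ?thesis
      unfolding u_def by measurable
  qed
  have l2sq_u: "l2sq \<xi> = (\<integral>\<^sup>+p. \<integral>\<^sup>+z. u p z \<partial>lborel \<partial>?C)"
    by (simp add: l2sq_def u_def ennreal_power)
  have shift: "(\<integral>\<^sup>+p. \<integral>\<^sup>+z. u (p - q) z \<partial>lborel \<partial>?C) = l2sq \<xi>" for q
    unfolding l2sq_u by (rule nn_integral_count_space_shift)
  have "l2sq (repr h \<mu> \<nu> \<phi> \<xi>)
      \<le> (\<integral>\<^sup>+p. \<integral>\<^sup>+z. \<integral>\<^sup>+q. S * mode_sup \<phi> q * u (p - q) z \<partial>?C \<partial>lborel \<partial>?C)"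
  proof (unfold l2sq_def, intro nn_integral_mono)
    fix p z
    have "ennreal ((norm (repr h \<mu> \<nu> \<phi> \<xi> (fst z) (snd z) p))\<^sup>2)
        \<le> S * (\<integral>\<^sup>+q. mode_sup \<phi> q * ennreal (norm (\<xi> (fst z) (snd z) (p - q))) ^ 2 \<partial>?C)"
      unfolding S_def ennreal_power[OF norm_ge_zero, symmetric] by (rule norm_repr_sq_le)
    then show "ennreal ((norm (repr h \<mu> \<nu> \<phi> \<xi> (fst z) (snd z) p))\<^sup>2)
          * indicator (UNIV \<times> {0..<1}) z
        \<le> (\<integral>\<^sup>+q. S * mode_sup \<phi> q * u (p - q) z \<partial>?C)"
      unfolding u_def
      by (auto simp: nn_integral_cmult[symmetric] nn_integral_multc[symmetric] ac_simps
          split: split_indicator)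
  qed
  also have "\<dots> = (\<integral>\<^sup>+p. \<integral>\<^sup>+q. \<integral>\<^sup>+z. S * mode_sup \<phi> q * u (p - q) z \<partial>lborel \<partial>?C \<partial>?C)"
    by (intro nn_integral_cong nn_integral_count_space_nn_integral) (simp, measurable)
  also have "\<dots> = (\<integral>\<^sup>+q. \<integral>\<^sup>+p. \<integral>\<^sup>+z. S * mode_sup \<phi> q * u (p - q) z \<partial>lborel \<partial>?C \<partial>?C)"
    by (rule nn_integral_count_space_nn_integral) simp_all
  also have "\<dots> = (\<integral>\<^sup>+q. S * mode_sup \<phi> q * (\<integral>\<^sup>+p. \<integral>\<^sup>+z. u (p - q) z \<partial>lborel \<partial>?C) \<partial>?C)"
    by (simp add: nn_integral_cmult)
  also have "\<dots> = S * S * l2sq \<xi>"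
    by (simp add: shift nn_integral_multc nn_integral_cmult S_def norm_ii1_eq_mode_sup)
  finally show ?thesis
    by (simp add: S_def power2_eq_square)
qed

lemma cnorm_le_norm_ii1:
  assumes "norm_ii1 \<phi> < \<infinity>"
  shows "cnorm h \<mu> \<nu> \<phi> \<le> enn2real (norm_ii1 \<phi>)"
proof -
  have "(SUP \<xi>\<in>L2unit. l2sq (repr h \<mu> \<nu> \<phi> \<xi>)) \<le> norm_ii1 \<phi> ^ 2"
  proof (rule SUP_least)
    fix \<xi> assume "\<xi> \<in> L2unit"
    then have "l2sq (repr h \<mu> \<nu> \<phi> \<xi>) \<le> norm_ii1 \<phi> ^ 2 * l2sq \<xi>" and "l2sq \<xi> \<le> 1"
      by (auto simp: L2unit_def intro: l2sq_repr_le)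
    then show "l2sq (repr h \<mu> \<nu> \<phi> \<xi>) \<le> norm_ii1 \<phi> ^ 2"
      by (metis mult.right_neutral mult_left_mono order_trans zero_le)
  qed
  then have "enn2real (SUP \<xi>\<in>L2unit. l2sq (repr h \<mu> \<nu> \<phi> \<xi>)) \<le> enn2real (norm_ii1 \<phi> ^ 2)"
    using assms by (intro enn2real_mono) (simp_all add: power_less_top_ennreal)
  also have "\<dots> = enn2real (norm_ii1 \<phi>) ^ 2"
    by (simp add: power2_eq_square enn2real_mult)
  finally have "enn2real (SUP \<xi>\<in>L2unit. l2sq (repr h \<mu> \<nu> \<phi> \<xi>)) \<le> enn2real (norm_ii1 \<phi>) ^ 2" .
  then show ?thesis
    unfolding cnorm_def by (simp add: real_le_lsqrt)
qed

lemma state_scale: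
  assumes "\<omega> \<in> states c h \<mu> \<nu>" and "\<Phi> \<in> Asa c"
  shows "\<omega> (\<lambda>x y p. of_real r * \<Phi> x y p) = r * \<omega> \<Phi>"
  using assms unfolding states_def by blast

lemma state_add:
  assumes "\<omega> \<in> states c h \<mu> \<nu>" and "\<Phi> \<in> Asa c" and "\<Psi> \<in> Asa c"
  shows "\<omega> (\<lambda>x y p. \<Phi> x y p + \<Psi> x y p) = \<omega> \<Phi> + \<omega> \<Psi>"
  using assms unfolding states_def by blast

lemma state_linear:
  assumes \<omega>: "\<omega> \<in> states c h \<mu> \<nu>" and \<Phi>: "\<Phi> \<in> Asa c" and \<Psi>: "\<Psi> \<in> Asa c"
  shows "\<omega> (\<lambda>x y p. of_real r * \<Phi> x y p + of_real s * \<Psi> x y p) = r * \<omega> \<Phi> + s * \<omega> \<Psi>"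
  using state_add[OF \<omega> Asa_scale[OF \<Phi>] Asa_scale[OF \<Psi>]]
  by (simp add: state_scale[OF \<omega> \<Phi>] state_scale[OF \<omega> \<Psi>])

lemma state_unitI: "\<omega> \<in> states c h \<mu> \<nu> \<Longrightarrow> \<omega> unitI = 1"
  unfolding states_def by blast

lemma state_bounded:
  assumes "\<omega> \<in> states c h \<mu> \<nu>"
  obtains K where "\<And>a. a \<in> Asa c \<Longrightarrow> \<bar>\<omega> a\<bar> \<le> K * cnorm h \<mu> \<nu> a"
  using assms unfolding states_def by blast

lemma state_SUP_unit_ball: "\<omega> \<in> states c h \<mu> \<nu> \<Longrightarrow> (SUP a\<in>{a\<in>Asa c. cnorm h \<mu> \<nu> a \<le> 1}. \<bar>\<omega> a\<bar>) = 1"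
  unfolding states_def by blast

lemma abs_state_le_1:
  assumes \<omega>: "\<omega> \<in> states c h \<mu> \<nu>" and a: "a \<in> Asa c" and a_le: "cnorm h \<mu> \<nu> a \<le> 1"
  shows "\<bar>\<omega> a\<bar> \<le> 1"
proof -
  obtain K where K: "\<And>b. b \<in> Asa c \<Longrightarrow> \<bar>\<omega> b\<bar> \<le> K * cnorm h \<mu> \<nu> b"
    using state_bounded[OF \<omega>] by blast
  have "bdd_above ((\<lambda>b. \<bar>\<omega> b\<bar>) ` {b \<in> Asa c. cnorm h \<mu> \<nu> b \<le> 1})"
  proof (rule bdd_aboveI2)
    fix b assume "b \<in> {b \<in> Asa c. cnorm h \<mu> \<nu> b \<le> 1}"
    then have b: "b \<in> Asa c" and "0 \<le> cnorm h \<mu> \<nu> b" "cnorm h \<mu> \<nu> b \<le> 1"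
      by (simp_all add: cnorm_def)
    then have "K * cnorm h \<mu> \<nu> b \<le> \<bar>K\<bar>"
      by (metis abs_ge_self abs_ge_zero mult_left_le mult_right_mono order_trans)
    then show "\<bar>\<omega> b\<bar> \<le> \<bar>K\<bar>"
      using K[OF b] by linarith
  qed
  then have "\<bar>\<omega> a\<bar> \<le> (SUP b\<in>{b \<in> Asa c. cnorm h \<mu> \<nu> b \<le> 1}. \<bar>\<omega> b\<bar>)"
    by (rule cSUP_upper[rotated]) (simp add: a a_le)
  then show ?thesis
    by (simp add: state_SUP_unit_ball[OF \<omega>])
qed

lemma abs_state_le_1_if_norm_ii1_le_1:
  assumes "\<omega> \<in> states c h \<mu> \<nu>" and "a \<in> Asa c" and "norm_ii1 a \<le> 1"
  shows "\<bar>\<omega> a\<bar> \<le> 1"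
proof -
  have "norm_ii1 a < \<infinity>" and "enn2real (norm_ii1 a) \<le> 1"
    using assms(3) by (simp_all add: order_le_less_trans enn2real_leI)
  then have "cnorm h \<mu> \<nu> a \<le> 1"
    using cnorm_le_norm_ii1[of a h \<mu> \<nu>] by linarith
  with assms(1,2) show ?thesis
    by (rule abs_state_le_1)
qed

lemma abs_state_diff_le_6:
  assumes \<omega>1: "\<omega>1 \<in> states c h \<mu> \<nu>" and \<omega>2: "\<omega>2 \<in> states c h \<mu> \<nu>"
    and a: "a \<in> Asa c" and L: "Lnorm c a \<le> 1"
  shows "\<bar>\<omega>1 a - \<omega>2 a\<bar> \<le> 6"
proof -
  define t where "t = Re (a 0 0 0)"
  define b where "b = (\<lambda>x y p. a x y p - of_real t * unitI x y p)"
  define \<psi> where "\<psi> = (\<lambda>x y p. of_real (1 / 3) * b x y p)"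
  have b_linear: "b = (\<lambda>x y p. of_real 1 * a x y p + of_real (- t) * unitI x y p)"
    by (simp add: b_def)
  have b: "b \<in> Asa c"
    unfolding b_linear using a unitI_in_Asa by (rule Asa_linear)
  have \<psi>: "\<psi> \<in> Asa c"
    unfolding \<psi>_def using b by (rule Asa_scale)
  have "of_real t = a 0 0 0"
    using a by (simp add: t_def Asa_def zero_mode_real_if_invol_fixed)
  then have "norm_ii1 b \<le> 3"
    using norm_ii1_sub_zero_mode_le_3[of a c] a L by (simp add: b_def Asa_def)
  then have "norm_ii1 \<psi> \<le> ennreal (1 / 3) * 3"
    unfolding \<psi>_def norm_ii1_scale by (simp add: mult_left_mono)
  also have "\<dots> = 1"
    using ennreal_mult'[of "1 / 3" 3] by simp
  finally have bound: "\<bar>\<omega> \<psi>\<bar> \<le> 1" if "\<omega> \<in> states c h \<mu> \<nu>" for \<omega>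
    by (rule abs_state_le_1_if_norm_ii1_le_1[OF that \<psi>])
  have shift: "3 * \<omega> \<psi> = \<omega> a - t" if \<omega>: "\<omega> \<in> states c h \<mu> \<nu>" for \<omega>
  proof -
    have "\<omega> b = \<omega> a - t"
      using state_linear[OF \<omega> a unitI_in_Asa, of 1 "- t"] state_unitI[OF \<omega>] by (simp add: b_linear)
    then show ?thesis
      using state_scale[OF \<omega> b, of "1 / 3"] by (simp add: \<psi>_def)
  qed
  show ?thesis
    using bound[OF \<omega>1] bound[OF \<omega>2] shift[OF \<omega>1] shift[OF \<omega>2]
    unfolding abs_le_iff by linarith
qed

theorem mainTheorem4:
  fixes c :: int and h \<mu> \<nu> :: real and \<omega>1 \<omega>2 :: "fn3 \<Rightarrow> real"
  assumes "c > 0" and "\<mu>\<^sup>2 + \<nu>\<^sup>2 \<noteq> 0"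
    and "\<omega>1 \<in> states c h \<mu> \<nu>" and "\<omega>2 \<in> states c h \<mu> \<nu>"
  shows "rhoL c \<omega>1 \<omega>2 \<le> 6"
  unfolding rhoL_def
  using abs_state_diff_le_6[OF assms(3,4)] by (auto intro: SUP_least)

end
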